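(* Let $\rho_0>0$, $\beta>0$, and let $f:\mathbb{R}^d\to\mathbb{R}_+$ be Lipschitz continuous with $|\nabla f|_\infty\le1$ satisfying $(G_{\rho_0,\beta})$ with set $A\subset S^{d-1}$. Let $V$ be a $C^2$ function on $\mathbb{R}^d$ with $e^{-V}$ Lebesgue integrable and such that for some $\bar\lambda\ge1$, $\bar\lambda I_{d\times d}\ge\mathrm{Hess}(V)\ge0$; let $\gamma(dx)=Z^{-1}e^{-V(x)}dx$ be the associated Gibbs probability measure. Let $\mu(dx)=m(x)dx$ be a probability measure and assume there is $\kappa\ge1$ such that $m(x)\ge\kappa^{-1}Z^{-1}e^{-V(x)}$ for $|x|\ge\rho_0$. Let $\bar\Lambda=\frac{\bar\lambda}{2}+\frac{\sup_{s\in S^{d-1}}|V(s\rho_0)|}{\rho_0^2}+\frac{\sup_{s\in S^{d-1}}|\nabla V(s\rho_0)|}{\rho_0}$. Then, with $Y\sim\mu$, for all $r>0$, $$\mathbb{P}_\mu\left[f(Y)-\mu(f)\ge r-(W_1(\mu,\gamma)+\delta(f,\gamma))\right]\ge\begin{cases}\frac{K(d,A)}{Z\bar\Lambda^{d/2}\kappa}\exp\left(-\bar\Lambda\left[\frac r\beta\vee\rho_0\right]^2\right),& d\text{ even},\\ \frac{\arccos(\theta^{-1/2})K(d,A)}{Z\bar\Lambda^{d/2}\kappa}\exp\left(-\theta\bar\Lambda\left[\frac r\beta\vee\rho_0\right]^2\right)\ \text{for all }\theta>1,& d\text{ odd},\end{cases}$$ where $\delta(f,\gamma)=\gamma(f)+\beta\rho_0-\underline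 f$, $\underline f=\inf_{s\in S^{d-1}}f(s\rho_0)$, and $K(d,A)=\frac{|A|(d/2-1)!}{2}$ for $d$ even, $K(d,A)=\frac{|A|\prod_{j=1}^{(d-1)/2}(j-1/2)}{\pi^{1/2}}$ for $d$ odd.
   Context: $(G_{\rho_0,\beta})$ for $F:\mathbb{R}^d\to\mathbb{R}$: there exists $A\subset S^{d-1}$ (of non-empty interior and surface measure $|A|\ge\varepsilon>0$ for $d\ge2$; $A\subset\{-1,1\}$ for $d=1$) such that for every $y$ with $|y|\ge\rho_0$ and $\pi_{S^{d-1}}(y):=y/|y|\in A$, with $y_0=\rho_0\pi_{S^{d-1}}(y)$, $F(y)-F(y_0)\ge\beta|y-y_0|$. $|A|$ denotes the surface (Lebesgue) measure of $A$ on $S^{d-1}$. $\mu(f)=\int f\,d\mu$. $W_1(\mu,\gamma)=\sup_{|\nabla F|_\infty\le1}|\mu(F)-\gamma(F)|$, supremum over Lipschitz $F$ with essential sup of the gradient norm at most $1$. *)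

theory Defs
  imports "HOL-Analysis.Analysis"
begin

definition unit_cone :: "'a::euclidean_space set \<Rightarrow> 'a set" where
  "unit_cone A = {t *\<^sub>R s | t s. 0 < t \<and> t \<le> 1 \<and> s \<in> A}"

text \<open>Surface (Hausdorff) measure |A| of a subset A of the unit sphere S^{d-1}, given by the
  classical cone formula |A| = d * Leb({t s : 0<t<=1, s in A}). For d = 1 this is the
  counting measure on {-1,1}.\<close>
definition sphere_measure :: "'a::euclidean_space set \<Rightarrow> real" where
  "sphere_measure A = real DIM('a) * measure lebesgue (unit_cone A)"

definition G_cond :: "real \<Rightarrow> real \<Rightarrow> ('a::euclidean_space \<Rightarrow> real) \<Rightarrow> 'a set \<Rightarrow> bool" where
  "G_cond \<rho>\<^sub>0 \<beta> F A \<longleftrightarrow>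
     A \<subseteq> sphere 0 1 \<and> unit_cone A \<in> sets lebesgue \<and>
     (DIM('a) \<ge> 2 \<longrightarrow>
        (\<exists>U. open U \<and> U \<inter> sphere 0 1 \<noteq> {} \<and> U \<inter> sphere 0 1 \<subseteq> A) \<and> sphere_measure A > 0) \<and>
     (\<forall>y. norm y \<ge> \<rho>\<^sub>0 \<and> y /\<^sub>R norm y \<in> A \<longrightarrow>
        F y - F (\<rho>\<^sub>0 *\<^sub>R (y /\<^sub>R norm y)) \<ge> \<beta> * norm (y - \<rho>\<^sub>0 *\<^sub>R (y /\<^sub>R norm y)))"

text \<open>Wasserstein-1 distance (Kantorovich-Rubinstein dual form): supremum over
  Lipschitz F with |grad F|_inf <= 1, i.e. 1-Lipschitz F.\<close>
definition W1 :: "'a::euclidean_space measure \<Rightarrow> 'a measure \<Rightarrow> real" where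
  "W1 M N = (SUP F \<in> {F. 1-lipschitz_on UNIV F}. \<bar>(\<integral>x. F x \<partial>M) - (\<integral>x. F x \<partial>N)\<bar>)"

end

theory Submission
  imports Defs "HOL-Probability.Probability_Measure"
begin

text \<open>
  Put R = max (r/beta) rho0. On the part of the cone over A outside the ball of radius R,
  condition (G) gives f y >= f_low + beta (|y| - rho0), and together with mu(f) <= gamma(f) + W1(mu, gamma)
  this places y in the event. There the density of mu is at least exp(-V y)/(kappa Z) >=
  exp(-Lambda |y|^2)/(kappa Z), since Taylor's formula at the point rho0 y/|y| of the sphere bounds V
  quadratically. The Gaussian mass of the truncated cone follows from the layer-cake formula and the
  volume |A| (rho^d - R^d)/d of its shells. Finiteness of W1(mu, gamma) needs a first moment of gamma:
  a convex V with integrable exp(-V) grows at least linearly.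
\<close>

section \<open>Second-order calculus along lines\<close>

lemma has_real_derivative_line_restriction:
  fixes V :: "'a::real_inner \<Rightarrow> real" and gradV :: "'a \<Rightarrow> 'a" and H :: "'a \<Rightarrow> 'a \<Rightarrow>\<^sub>L 'a"
  assumes V_grad: "\<And>x. (V has_derivative (\<lambda>h. gradV x \<bullet> h)) (at x)"
    and V_hess: "\<And>x. (gradV has_derivative blinfun_apply (H x)) (at x)"
  shows "((\<lambda>t. V (x + t *\<^sub>R h)) has_real_derivative (gradV (x + t *\<^sub>R h) \<bullet> h)) (at t)"
    and "((\<lambda>t. gradV (x + t *\<^sub>R h) \<bullet> h) has_real_derivative (h \<bullet> H (x + t *\<^sub>R h) h)) (at t)"
proof -
  have line: "((\<lambda>t. x + t *\<^sub>R h) has_derivative (\<lambda>s. s *\<^sub>R h)) (at t)"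
    by (auto intro!: derivative_eq_intros)
  have "((\<lambda>t. V (x + t *\<^sub>R h)) has_derivative (\<lambda>s. gradV (x + t *\<^sub>R h) \<bullet> (s *\<^sub>R h))) (at t)"
    by (rule has_derivative_compose[OF line V_grad])
  then show "((\<lambda>t. V (x + t *\<^sub>R h)) has_real_derivative (gradV (x + t *\<^sub>R h) \<bullet> h)) (at t)"
    unfolding has_field_derivative_def by (simp add: mult_commute_abs)
  have "((\<lambda>t. gradV (x + t *\<^sub>R h)) has_derivative (\<lambda>s. H (x + t *\<^sub>R h) (s *\<^sub>R h))) (at t)"
    by (rule has_derivative_compose[OF line V_hess])
  then have "((\<lambda>t. gradV (x + t *\<^sub>R h) \<bullet> h) has_derivative (\<lambda>s. H (x + t *\<^sub>R h) (s *\<^sub>R h) \<bullet> h)) (at t)"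
    by (rule has_derivative_inner_left)
  then show "((\<lambda>t. gradV (x + t *\<^sub>R h) \<bullet> h) has_real_derivative (h \<bullet> H (x + t *\<^sub>R h) h)) (at t)"
    unfolding has_field_derivative_def by (simp add: blinfun.scaleR_right inner_commute mult_commute_abs)
qed

lemma taylor_upper_bound_of_second_derivative_le:
  fixes g g' g'' :: "real \<Rightarrow> real"
  assumes g: "\<And>t. (g has_real_derivative g' t) (at t)"
    and g': "\<And>t. (g' has_real_derivative g'' t) (at t)"
    and M: "\<And>t. g'' t \<le> M"
    and t: "0 \<le> t"
  shows "g t \<le> g 0 + g' 0 * t + M / 2 * t\<^sup>2"
proof -
  define h' where "h' s = g' s - g' 0 - M * s" for s
  have dh': "(h' has_real_derivative (g'' s - M)) (at s)" for s
    unfolding h'_def by (auto intro!: derivative_eq_intros g')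
  have h'_nonpos: "h' s \<le> 0" if "0 \<le> s" for s
    using DERIV_nonpos_imp_nonincreasing[of 0 s h'] dh' M that by (fastforce simp: h'_def)
  define h where "h s = g s - g 0 - g' 0 * s - M / 2 * s\<^sup>2" for s
  have dh: "(h has_real_derivative h' s) (at s)" for s
    unfolding h_def h'_def by (auto intro!: derivative_eq_intros g)
  have "h t \<le> h 0"
    using DERIV_nonpos_imp_nonincreasing[of 0 t h] dh h'_nonpos t by fastforce
  then show ?thesis by (simp add: h_def)
qed

lemma convex_on_of_second_derivative_nonneg:
  fixes g g' g'' :: "real \<Rightarrow> real"
  assumes g: "\<And>t. (g has_real_derivative g' t) (at t)"
    and g': "\<And>t. (g' has_real_derivative g'' t) (at t)"
    and nonneg: "\<And>t. g'' t \<ge> 0"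
  shows "convex_on UNIV g"
proof (rule convex_on_realI[OF connected_UNIV])
  show "(g has_real_derivative g' x) (at x)" for x by (rule g)
  show "g' x \<le> g' y" if "x \<le> y" for x y
    using DERIV_nonneg_imp_nondecreasing[of x y g'] g' nonneg that by blast
qed

lemma convex_on_of_hessian_nonneg:
  fixes V :: "'a::real_inner \<Rightarrow> real" and gradV :: "'a \<Rightarrow> 'a" and H :: "'a \<Rightarrow> 'a \<Rightarrow>\<^sub>L 'a"
  assumes V_grad: "\<And>x. (V has_derivative (\<lambda>h. gradV x \<bullet> h)) (at x)"
    and V_hess: "\<And>x. (gradV has_derivative blinfun_apply (H x)) (at x)"
    and nonneg: "\<And>x v. 0 \<le> v \<bullet> H x v"
  shows "convex_on UNIV V"
proof (rule convex_onI)
  fix x y :: 'a and u :: real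
  assume u: "0 < u" "u < 1"
  let ?g = "\<lambda>t. V (x + t *\<^sub>R (y - x))"
  have "convex_on UNIV ?g"
    using has_real_derivative_line_restriction[OF V_grad V_hess] nonneg
    by (rule convex_on_of_second_derivative_nonneg)
  from convex_onD[OF this, of u 0 1] u
  have "?g ((1 - u) *\<^sub>R 0 + u *\<^sub>R 1) \<le> (1 - u) * ?g 0 + u * ?g 1" by simp
  moreover have "x + ((1 - u) *\<^sub>R 0 + u *\<^sub>R 1) *\<^sub>R (y - x) = (1 - u) *\<^sub>R x + u *\<^sub>R y"
    by (simp add: algebra_simps)
  ultimately show "V ((1 - u) *\<^sub>R x + u *\<^sub>R y) \<le> (1 - u) * V x + u * V y" by simp
qed simp

lemma quadratic_upper_bound_of_hessian_le:
  fixes V :: "'a::real_inner \<Rightarrow> real" and gradV :: "'a \<Rightarrow> 'a" and H :: "'a \<Rightarrow> 'a \<Rightarrow>\<^sub>L 'a"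
  assumes V_grad: "\<And>x. (V has_derivative (\<lambda>h. gradV x \<bullet> h)) (at x)"
    and V_hess: "\<And>x. (gradV has_derivative blinfun_apply (H x)) (at x)"
    and upper: "\<And>x v. v \<bullet> H x v \<le> lam * (norm v)\<^sup>2"
  shows "V y \<le> V x + gradV x \<bullet> (y - x) + lam / 2 * (norm (y - x))\<^sup>2"
  using taylor_upper_bound_of_second_derivative_le
      [OF has_real_derivative_line_restriction[OF V_grad V_hess] upper, of 1 x "y - x"]
  by simp

section \<open>Convex potentials with integrable Gibbs weight\<close>

lemma convex_on_le_on_ball_shrink:
  fixes V :: "'a::real_normed_vector \<Rightarrow> real"
  assumes conv: "convex_on UNIV V"
    and ball_le: "\<And>w. norm w < \<delta> \<Longrightarrow> V w \<le> c" and x_le: "V x \<le> c"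
    and t: "0 \<le> t" "t < 1" and z: "dist z (t *\<^sub>R x) < (1 - t) * \<delta>"
  shows "V z \<le> c"
proof -
  define w where "w = (1 / (1 - t)) *\<^sub>R (z - t *\<^sub>R x)"
  have "norm w = dist z (t *\<^sub>R x) / (1 - t)"
    using t by (simp add: w_def dist_norm)
  also have "\<dots> < \<delta>" using z t by (simp add: divide_less_eq mult.commute)
  finally have w_le: "V w \<le> c" by (rule ball_le)
  have "z = (1 - t) *\<^sub>R w + t *\<^sub>R x" using t by (simp add: w_def)
  then have "V z \<le> (1 - t) * V w + t * V x"
    using convex_onD[OF conv, of t w x] t by simp
  also have "\<dots> \<le> (1 - t) * c + t * c"
    using w_le x_le t by (intro add_mono mult_left_mono) auto
  finally show ?thesis by (simp add: algebra_simps)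
qed

lemma disjoint_balls_count_le:
  fixes V :: "'a::euclidean_space \<Rightarrow> real" and a :: "nat \<Rightarrow> 'a"
  assumes int: "integrable lborel (\<lambda>x. exp (- V x))" and r: "r > 0"
    and le: "\<And>j z. j < n \<Longrightarrow> dist z (a j) < r \<Longrightarrow> V z \<le> c"
    and disj: "\<And>i j. i < n \<Longrightarrow> j < n \<Longrightarrow> i \<noteq> j \<Longrightarrow> dist (a i) (a j) \<ge> 2 * r"
  shows "real n * measure lborel (ball (0::'a) r) \<le> exp c * (\<integral>x. exp (- V x) \<partial>lborel)"
proof -
  have unique: "i = j" if "i < n" "j < n" "y \<in> ball (a i) r" "y \<in> ball (a j) r" for i j y
    using disj[of i j] that dist_triangle[of "a i" "a j" y] by (force simp: dist_commute)
  have pointwise: "exp (- c) * (\<Sum>j<n. indicator (ball (a j) r) y) \<le> exp (- V y)" for y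
  proof (cases "\<exists>j<n. y \<in> ball (a j) r")
    case True
    then obtain j0 where j0: "j0 < n" "y \<in> ball (a j0) r" by blast
    have "(\<Sum>j<n. indicator (ball (a j) r) y) = (\<Sum>j<n. if j = j0 then 1 else 0 :: real)"
      using unique j0 by (intro sum.cong) (auto simp: indicator_def)
    then show ?thesis using j0 le[of j0 y] by (simp add: dist_commute)
  next
    case False
    then have "(\<Sum>j<n. indicator (ball (a j) r) y) = (0::real)"
      by (intro sum.neutral) (auto simp: indicator_def)
    then show ?thesis by simp
  qed
  have int_ball: "integrable lborel (indicator (ball (a j) r) :: 'a \<Rightarrow> real)" for j
    using emeasure_bounded_finite[OF bounded_ball] by (intro integrable_real_indicator) auto
  have "exp (- c) * (\<Sum>j<n. measure lborel (ball (a j) r))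
      = (\<integral>y. exp (- c) * (\<Sum>j<n. indicator (ball (a j) r) y) \<partial>lborel)"
    using int_ball emeasure_bounded_finite[OF bounded_ball] by (simp add: integral_sum)
  also have "\<dots> \<le> (\<integral>x. exp (- V x) \<partial>lborel)"
    using pointwise int int_ball by (intro integral_mono) auto
  finally show ?thesis
    using r by (simp add: content_ball exp_minus field_simps)
qed

lemma convex_on_sublevel_bounded:
  fixes V :: "'a::euclidean_space \<Rightarrow> real"
  assumes conv: "convex_on UNIV V" and cont: "continuous_on UNIV V"
    and int: "integrable lborel (\<lambda>x. exp (- V x))"
  shows "bounded {x. V x \<le> V 0 + 1}"
proof -
  define c where "c = V 0 + 1"
  have "isCont V 0" using cont by (simp add: continuous_on_eq_continuous_at)
  then obtain \<delta> where \<delta>: "\<delta> > 0" "\<And>w. dist w 0 < \<delta> \<Longrightarrow> dist (V w) (V 0) < 1"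
    unfolding continuous_at_eps_delta by (meson zero_less_one)
  have near_0: "V w \<le> c" if "norm w < \<delta>" for w
    using \<delta>(2)[of w] that by (auto simp: c_def dist_norm)
  define Z where "Z = (\<integral>x. exp (- V x) \<partial>lborel)"
  define b where "b = measure lborel (ball (0::'a) (\<delta>/2))"
  have b: "b > 0" unfolding b_def using \<delta> by simp
  have Z: "Z \<ge> 0" unfolding Z_def by (simp add: integral_nonneg_AE)
  txt \<open>Convexity puts disjoint balls of radius \<open>\<delta>/2\<close> along the segment from \<open>0\<close> to \<open>x\<close> into
    the sublevel set; their number is bounded by the finite mass of \<open>exp (- V)\<close>.\<close>
  have "norm x \<le> 2 * \<delta> * (exp c * Z / b + 1)" if x: "V x \<le> c" for x
  proof (cases "norm x \<le> 2 * \<delta>")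
    case True
    have "2 * \<delta> * 1 \<le> 2 * \<delta> * (exp c * Z / b + 1)" using \<delta> Z b by (intro mult_left_mono) auto
    with True show ?thesis by simp
  next
    case False
    then have nx: "norm x > 2 * \<delta>" by simp
    define n where "n = nat \<lfloor>norm x / (2 * \<delta>)\<rfloor>"
    have n: "real n \<le> norm x / (2 * \<delta>)" "norm x / (2 * \<delta>) < real n + 1"
      unfolding n_def using nx \<delta> by auto
    define a where "a j = (real j * \<delta> / norm x) *\<^sub>R x" for j :: nat
    have "real n * b \<le> exp c * Z"
      unfolding b_def Z_def
    proof (rule disjoint_balls_count_le[OF int, of "\<delta>/2" n a])
      show "V z \<le> c" if j: "j < n" and z: "dist z (a j) < \<delta>/2" for j z
      proof -
        define t where "t = real j * \<delta> / norm x"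
        have "t < real n * \<delta> / norm x"
          unfolding t_def using j nx \<delta> by (intro divide_strict_right_mono mult_strict_right_mono) auto
        also have "\<dots> \<le> 1/2" using n nx \<delta> by (simp add: divide_le_eq field_simps)
        finally have t: "0 \<le> t" "t < 1/2" using \<delta> by (auto simp: t_def)
        have "\<delta>/2 < (1 - t) * \<delta>" using mult_strict_right_mono[of t "1/2" \<delta>] t \<delta> by argo
        moreover have "dist z (t *\<^sub>R x) < \<delta>/2" using z by (simp add: a_def t_def)
        ultimately have "dist z (t *\<^sub>R x) < (1 - t) * \<delta>" by linarith
        with t show ?thesis by (intro convex_on_le_on_ball_shrink[OF conv near_0 x]) auto
      qed
      show "2 * (\<delta>/2) \<le> dist (a i) (a j)" if "i \<noteq> j" for i j
      proof -
        have "dist (a i) (a j) = \<bar>real i - real j\<bar> * \<delta>"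
          using nx \<delta> by (auto simp add: a_def dist_norm abs_mult simp flip: scaleR_diff_left diff_divide_distrib
              left_diff_distrib)
        moreover have "\<bar>real i - real j\<bar> \<ge> 1" using that by linarith
        ultimately show ?thesis using \<delta> by simp
      qed
    qed (use \<delta> in simp)
    then have "real n \<le> exp c * Z / b" using b by (simp add: field_simps)
    then have "norm x / (2 * \<delta>) < exp c * Z / b + 1" using n by linarith
    then show ?thesis using \<delta> by (simp add: field_simps)
  qed
  then show ?thesis unfolding bounded_iff c_def by blast
qed

lemma convex_on_linear_lower_bound:
  fixes V :: "'a::euclidean_space \<Rightarrow> real"
  assumes conv: "convex_on UNIV V" and cont: "continuous_on UNIV V"
    and int: "integrable lborel (\<lambda>x. exp (- V x))"
  obtains M where "M > 0" "\<And>x. norm x \<ge> M \<Longrightarrow> V 0 + norm x / M \<le> V x"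
proof -
  obtain B where B: "B > 0" "\<And>x. V x \<le> V 0 + 1 \<Longrightarrow> norm x \<le> B"
    using convex_on_sublevel_bounded[OF assms] unfolding bounded_pos by auto
  have "V 0 + norm x / (2 * B) \<le> V x" if x: "norm x \<ge> 2 * B" for x
  proof -
    define s where "s = 2 * B / norm x"
    have nx: "norm x > 0" using x B(1) by linarith
    then have s: "0 < s" "s \<le> 1" using x B(1) by (auto simp: s_def field_simps)
    have "norm (s *\<^sub>R x) = 2 * B" using nx B(1) by (simp add: s_def)
    then have "V 0 + 1 < V (s *\<^sub>R x)" using B(1) B(2)[of "s *\<^sub>R x"] by linarith
    also have "V (s *\<^sub>R x) \<le> (1 - s) * V 0 + s * V x"
      using convex_onD[OF conv, of s 0 x] s by simp
    finally have "1 / s < V x - V 0" using s by (simp add: field_simps)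
    then show ?thesis by (simp add: s_def)
  qed
  with B show thesis by (intro that[of "2 * B"]) auto
qed

lemma lborel_integrable_affine:
  fixes f :: "'a::euclidean_space \<Rightarrow> 'b::{banach, second_countable_topology}"
  assumes f: "integrable lborel f" and c: "c \<noteq> 0"
  shows "integrable lborel (\<lambda>x. f (t + c *\<^sub>R x))"
proof -
  have [measurable]: "f \<in> borel_measurable borel" using f by auto
  have "(\<integral>\<^sup>+x. ennreal (norm (f x)) \<partial>lborel)
      = ennreal (\<bar>c\<bar> ^ DIM('a)) * (\<integral>\<^sup>+x. ennreal (norm (f (t + c *\<^sub>R x))) \<partial>lborel)"
    by (subst lborel_affine[OF c, of t])
       (simp add: nn_integral_density nn_integral_distr nn_integral_cmult)
  then show ?thesis
    using f c unfolding integrable_iff_bounded by (auto simp: ennreal_mult_less_top)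
qed

lemma convex_on_integrable_norm_exp:
  fixes V :: "'a::euclidean_space \<Rightarrow> real"
  assumes conv: "convex_on UNIV V" and cont: "continuous_on UNIV V"
    and int: "integrable lborel (\<lambda>x. exp (- V x))"
  shows "integrable lborel (\<lambda>x. norm x * exp (- V x))"
proof -
  have [measurable]: "V \<in> borel_measurable borel"
    using cont by (rule borel_measurable_continuous_onI)
  obtain M where M: "M > 0" "\<And>x. norm x \<ge> M \<Longrightarrow> V 0 + norm x / M \<le> V x"
    using convex_on_linear_lower_bound[OF assms] by blast
  have bound: "norm x * exp (- V x) \<le> M * exp (- V x) + 2 * M * exp (- V ((1/2) *\<^sub>R x))" for x
  proof (cases "norm x \<le> M")
    case True
    then have "norm x * exp (- V x) \<le> M * exp (- V x)" by (intro mult_right_mono) auto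
    moreover have "0 \<le> 2 * M * exp (- V ((1/2) *\<^sub>R x))" using M(1) by simp
    ultimately show ?thesis by linarith
  next
    case False
    define y where "y = norm x / (2 * M)"
    have "V ((1/2) *\<^sub>R x) \<le> (1 - 1/2) * V 0 + (1/2) * V x"
      using convex_onD[OF conv, of "1/2" 0 x] by simp
    moreover have "2 * y = norm x / M" by (simp add: y_def)
    moreover have "V 0 + norm x / M \<le> V x" using M(2) False by simp
    ultimately have "y + V ((1/2) *\<^sub>R x) \<le> V x" by argo
    then have "exp (- V x) \<le> exp (- y) * exp (- V ((1/2) *\<^sub>R x))"
      by (simp flip: exp_add)
    then have "norm x * exp (- V x) \<le> norm x * exp (- y) * exp (- V ((1/2) *\<^sub>R x))"
      by (simp add: mult_left_mono mult.assoc)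
    also have "norm x * exp (- y) \<le> 2 * M"
    proof -
      have "norm x = 2 * M * y" using M(1) by (simp add: y_def)
      also have "\<dots> \<le> 2 * M * exp y"
        using M(1) exp_ge_add_one_self[of y] by (intro mult_left_mono) linarith+
      finally show ?thesis by (simp add: exp_minus field_simps)
    qed
    then have "norm x * exp (- y) * exp (- V ((1/2) *\<^sub>R x)) \<le> 2 * M * exp (- V ((1/2) *\<^sub>R x))"
      by (intro mult_right_mono) auto
    finally show ?thesis using M(1) by (simp add: add_increasing)
  qed
  have "integrable lborel (\<lambda>x. M * exp (- V x) + 2 * M * exp (- V ((1/2) *\<^sub>R x)))"
    using int lborel_integrable_affine[OF int, of "1/2" 0] by auto
  then show ?thesis
    by (rule Bochner_Integration.integrable_bound) (use bound M in \<open>auto simp: abs_mult\<close>)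
qed

lemma lipschitz_integral_minus_value_le:
  fixes M :: "'a::euclidean_space measure" and F :: "'a \<Rightarrow> real"
  assumes M: "prob_space M" "sets M = sets borel" "integrable M norm"
    and F: "1-lipschitz_on UNIV F"
  shows "\<bar>(\<integral>x. F x \<partial>M) - F 0\<bar> \<le> (\<integral>x. norm x \<partial>M)"
proof -
  interpret prob_space M by (rule M(1))
  have F_0: "\<bar>F x - F 0\<bar> \<le> norm x" for x
    using lipschitz_onD[OF F, of x 0] by (simp add: dist_real_def)
  have [measurable]: "F \<in> borel_measurable M"
    using borel_measurable_continuous_onI[OF lipschitz_on_continuous_on[OF F]]
      measurable_cong_sets[OF M(2) refl] by blast
  have int_diff: "integrable M (\<lambda>x. F x - F 0)"
    by (rule Bochner_Integration.integrable_bound[OF M(3)]) (use F_0 in auto)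
  then have "integrable M F"
    using Bochner_Integration.integrable_add[OF int_diff integrable_const[of "F 0"]] by simp
  then have "(\<integral>x. F x \<partial>M) - F 0 = (\<integral>x. F x - F 0 \<partial>M)"
    using prob_space by simp
  also have "\<bar>\<dots>\<bar> \<le> (\<integral>x. \<bar>F x - F 0\<bar> \<partial>M)" by (rule integral_abs_bound)
  also have "\<dots> \<le> (\<integral>x. norm x \<partial>M)"
    using int_diff M(3) F_0 by (intro integral_mono) auto
  finally show ?thesis .
qed

lemma lipschitz_integral_diff_le_W1:
  fixes M N :: "'a::euclidean_space measure" and F :: "'a \<Rightarrow> real"
  assumes M: "prob_space M" "sets M = sets borel" "integrable M norm"
    and N: "prob_space N" "sets N = sets borel" "integrable N norm"
    and F: "1-lipschitz_on UNIV F"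
  shows "\<bar>(\<integral>x. F x \<partial>M) - (\<integral>x. F x \<partial>N)\<bar> \<le> W1 M N"
  unfolding W1_def
proof (rule cSUP_upper)
  show "F \<in> {F. 1-lipschitz_on UNIV F}" using F by simp
  have "\<bar>(\<integral>x. G x \<partial>M) - (\<integral>x. G x \<partial>N)\<bar> \<le> (\<integral>x. norm x \<partial>M) + (\<integral>x. norm x \<partial>N)"
    if "G \<in> {F :: 'a \<Rightarrow> real. 1-lipschitz_on UNIV F}" for G
    using lipschitz_integral_minus_value_le[OF M, of G] lipschitz_integral_minus_value_le[OF N, of G] that
    by auto
  then show "bdd_above ((\<lambda>G. \<bar>(\<integral>x. G x \<partial>M) - (\<integral>x. G x \<partial>N)\<bar>) ` {F :: 'a \<Rightarrow> real. 1-lipschitz_on UNIV F})"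
    by (rule bdd_aboveI2)
qed

section \<open>The Gibbs measure\<close>

lemma prob_space_density_of_integral_eq_1:
  fixes m :: "'a \<Rightarrow> real"
  assumes int: "integrable M m" and nonneg: "\<And>x. 0 \<le> m x" and one: "(\<integral>x. m x \<partial>M) = 1"
  shows "prob_space (density M (\<lambda>x. ennreal (m x)))"
proof (rule prob_spaceI)
  have "emeasure (density M (\<lambda>x. ennreal (m x))) (space M) = (\<integral>\<^sup>+x. ennreal (m x) * indicator (space M) x \<partial>M)"
    using int by (intro emeasure_density) auto
  also have "\<dots> = (\<integral>\<^sup>+x. ennreal (m x) \<partial>M)" by (rule nn_integral_cong) simp
  also have "\<dots> = ennreal (\<integral>x. m x \<partial>M)"
    using int nonneg by (intro nn_integral_eq_integral) auto
  finally show "emeasure (density M (\<lambda>x. ennreal (m x))) (space (density M (\<lambda>x. ennreal (m x)))) = 1"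
    by (simp add: one)
qed

lemma gibbs_measure:
  fixes V :: "'a::euclidean_space \<Rightarrow> real"
  assumes conv: "convex_on UNIV V" and cont: "continuous_on UNIV V"
    and int: "integrable lborel (\<lambda>x. exp (- V x))"
  defines "Z \<equiv> (\<integral>x. exp (- V x) \<partial>lborel)"
  defines "\<gamma> \<equiv> density lborel (\<lambda>x. ennreal (exp (- V x) / Z))"
  shows "Z > 0" and "prob_space \<gamma>" and "integrable \<gamma> norm"
proof -
  have "Z \<noteq> 0"
  proof
    assume "Z = 0"
    then have "AE x in lborel. exp (- V x) = 0"
      using integral_nonneg_eq_0_iff_AE[OF int] by (simp add: Z_def)
    then have "emeasure lborel (UNIV :: 'a set) = 0"
      using AE_iff_null_sets[of "UNIV :: 'a set" lborel] by (simp add: null_sets_def)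
    then show False by simp
  qed
  moreover have "Z \<ge> 0" unfolding Z_def by (simp add: integral_nonneg_AE)
  ultimately show Z: "Z > 0" by simp
  show "prob_space \<gamma>"
    unfolding \<gamma>_def using int Z by (intro prob_space_density_of_integral_eq_1) (auto simp: Z_def)
  have "V \<in> borel_measurable borel" using cont by (rule borel_measurable_continuous_onI)
  then show "integrable \<gamma> norm"
    unfolding \<gamma>_def using convex_on_integrable_norm_exp[OF conv cont int] Z
    by (subst integrable_density) (auto simp: mult.commute)
qed

lemma cSUP_sphere_upper:
  fixes g :: "'a::euclidean_space \<Rightarrow> real"
  assumes "continuous_on (sphere 0 1) g" and "s \<in> sphere 0 1"
  shows "g s \<le> (SUP s \<in> sphere 0 1. g s)"
  using assms by (intro cSUP_upper bounded_imp_bdd_above compact_imp_bounded compact_continuous_image) auto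

lemma potential_le_quadratic_outside_ball:
  fixes V :: "'a::euclidean_space \<Rightarrow> real" and gradV :: "'a \<Rightarrow> 'a" and H :: "'a \<Rightarrow> 'a \<Rightarrow>\<^sub>L 'a"
  assumes V_grad: "\<And>x. (V has_derivative (\<lambda>h. gradV x \<bullet> h)) (at x)"
    and V_hess: "\<And>x. (gradV has_derivative blinfun_apply (H x)) (at x)"
    and upper: "\<And>x v. v \<bullet> H x v \<le> lam * (norm v)\<^sup>2" and lam: "lam > 0" and \<rho>\<^sub>0: "\<rho>\<^sub>0 > 0"
  defines "\<Lambda> \<equiv> lam / 2 + (SUP s \<in> sphere 0 1. \<bar>V (\<rho>\<^sub>0 *\<^sub>R s)\<bar>) / \<rho>\<^sub>0\<^sup>2
                + (SUP s \<in> sphere 0 1. norm (gradV (\<rho>\<^sub>0 *\<^sub>R s))) / \<rho>\<^sub>0"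
  shows "\<Lambda> > 0" and "\<And>y. norm y \<ge> \<rho>\<^sub>0 \<Longrightarrow> V y \<le> \<Lambda> * (norm y)\<^sup>2"
proof -
  define S1 where "S1 = (SUP s \<in> sphere (0::'a) 1. \<bar>V (\<rho>\<^sub>0 *\<^sub>R s)\<bar>)"
  define S2 where "S2 = (SUP s \<in> sphere (0::'a) 1. norm (gradV (\<rho>\<^sub>0 *\<^sub>R s)))"
  have V_cont: "continuous_on UNIV V"
    using has_derivative_continuous[OF V_grad] by (simp add: continuous_on_eq_continuous_at)
  have gradV_cont: "continuous_on UNIV gradV"
    using has_derivative_continuous[OF V_hess] by (simp add: continuous_on_eq_continuous_at)
  have S1: "\<bar>V (\<rho>\<^sub>0 *\<^sub>R s)\<bar> \<le> S1" if "s \<in> sphere 0 1" for s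
    unfolding S1_def using that
    by (intro cSUP_sphere_upper continuous_intros continuous_on_compose2[OF V_cont]) auto
  have S2: "norm (gradV (\<rho>\<^sub>0 *\<^sub>R s)) \<le> S2" if "s \<in> sphere 0 1" for s
    unfolding S2_def using that
    by (intro cSUP_sphere_upper continuous_intros continuous_on_compose2[OF gradV_cont]) auto
  obtain e :: 'a where e: "e \<in> sphere 0 1"
    using nonempty_Basis by (metis ex_in_conv mem_sphere_0 norm_Basis)
  have S_nonneg: "S1 \<ge> 0" "S2 \<ge> 0"
    using S1[OF e] S2[OF e] by (auto intro: order_trans[OF abs_ge_zero] order_trans[OF norm_ge_zero])
  have \<Lambda>: "\<Lambda> = lam / 2 + S1 / \<rho>\<^sub>0\<^sup>2 + S2 / \<rho>\<^sub>0" unfolding \<Lambda>_def S1_def S2_def ..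
  show "\<Lambda> > 0" unfolding \<Lambda> using lam S_nonneg \<rho>\<^sub>0 by (simp add: add_pos_nonneg)
  show "V y \<le> \<Lambda> * (norm y)\<^sup>2" if y: "norm y \<ge> \<rho>\<^sub>0" for y
  proof -
    define s where "s = y /\<^sub>R norm y"
    have ny: "norm y > 0" using y \<rho>\<^sub>0 by linarith
    then have s: "s \<in> sphere 0 1" by (simp add: s_def)
    have "y - \<rho>\<^sub>0 *\<^sub>R s = (norm y - \<rho>\<^sub>0) *\<^sub>R s" using ny by (simp add: s_def algebra_simps)
    then have dist: "norm (y - \<rho>\<^sub>0 *\<^sub>R s) = norm y - \<rho>\<^sub>0" using s y by simp
    have "V y \<le> V (\<rho>\<^sub>0 *\<^sub>R s) + gradV (\<rho>\<^sub>0 *\<^sub>R s) \<bullet> (y - \<rho>\<^sub>0 *\<^sub>R s) + lam / 2 * (norm (y - \<rho>\<^sub>0 *\<^sub>R s))\<^sup>2"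
      by (rule quadratic_upper_bound_of_hessian_le[OF V_grad V_hess upper])
    also have "\<dots> \<le> S1 + S2 * norm y + lam / 2 * (norm y)\<^sup>2"
    proof (intro add_mono)
      show "V (\<rho>\<^sub>0 *\<^sub>R s) \<le> S1" using S1[OF s] by linarith
      have "gradV (\<rho>\<^sub>0 *\<^sub>R s) \<bullet> (y - \<rho>\<^sub>0 *\<^sub>R s) \<le> norm (gradV (\<rho>\<^sub>0 *\<^sub>R s)) * norm (y - \<rho>\<^sub>0 *\<^sub>R s)"
        by (rule norm_cauchy_schwarz)
      also have "\<dots> \<le> S2 * norm y"
        using S2[OF s] S_nonneg dist \<rho>\<^sub>0 y by (intro mult_mono) auto
      finally show "gradV (\<rho>\<^sub>0 *\<^sub>R s) \<bullet> (y - \<rho>\<^sub>0 *\<^sub>R s) \<le> S2 * norm y" .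
      show "lam / 2 * (norm (y - \<rho>\<^sub>0 *\<^sub>R s))\<^sup>2 \<le> lam / 2 * (norm y)\<^sup>2"
        using dist y \<rho>\<^sub>0 lam by (intro mult_left_mono power_mono) auto
    qed
    also have "\<dots> \<le> S1 / \<rho>\<^sub>0\<^sup>2 * (norm y)\<^sup>2 + S2 / \<rho>\<^sub>0 * (norm y)\<^sup>2 + lam / 2 * (norm y)\<^sup>2"
    proof -
      have "\<rho>\<^sub>0\<^sup>2 \<le> (norm y)\<^sup>2" using y \<rho>\<^sub>0 by (intro power_mono) auto
      then have "1 \<le> (norm y)\<^sup>2 / \<rho>\<^sub>0\<^sup>2" using \<rho>\<^sub>0 by simp
      moreover have "\<rho>\<^sub>0 * norm y \<le> norm y * norm y" using y \<rho>\<^sub>0 by (intro mult_right_mono) auto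
      then have "norm y \<le> (norm y)\<^sup>2 / \<rho>\<^sub>0" using \<rho>\<^sub>0 by (simp add: power2_eq_square field_simps)
      ultimately have "S1 * 1 \<le> S1 * ((norm y)\<^sup>2 / \<rho>\<^sub>0\<^sup>2)" "S2 * norm y \<le> S2 * ((norm y)\<^sup>2 / \<rho>\<^sub>0)"
        using S_nonneg by (simp_all only: mult_left_mono)
      then show ?thesis by simp
    qed
    also have "\<dots> = \<Lambda> * (norm y)\<^sup>2" by (simp add: \<Lambda> algebra_simps)
    finally show ?thesis .
  qed
qed

section \<open>Cones over subsets of the sphere\<close>

definition radial_cone :: "'a::real_normed_vector set \<Rightarrow> 'a set" where
  "radial_cone A = {t *\<^sub>R s | t s. 0 < t \<and> s \<in> A}"

lemma mem_radial_cone: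
  fixes A :: "'a::real_normed_vector set"
  assumes "A \<subseteq> sphere 0 1"
  shows "y \<in> radial_cone A \<longleftrightarrow> y \<noteq> 0 \<and> y /\<^sub>R norm y \<in> A"
proof
  assume "y \<in> radial_cone A"
  then obtain t s where "y = t *\<^sub>R s" "0 < t" "s \<in> A" unfolding radial_cone_def by blast
  with assms show "y \<noteq> 0 \<and> y /\<^sub>R norm y \<in> A" by auto
next
  assume "y \<noteq> 0 \<and> y /\<^sub>R norm y \<in> A"
  then show "y \<in> radial_cone A"
    unfolding radial_cone_def by (intro CollectI exI[of _ "norm y"] exI[of _ "y /\<^sub>R norm y"]) auto
qed

lemma radial_cone_Int_cball_eq_vimage:
  fixes A :: "'a::euclidean_space set"
  assumes A: "A \<subseteq> sphere 0 1" and \<rho>: "\<rho> > 0"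
  shows "radial_cone A \<inter> cball 0 \<rho> = (\<lambda>x. (1 / \<rho>) *\<^sub>R x) -` unit_cone A"
proof -
  have "unit_cone A = radial_cone A \<inter> cball 0 1"
    using A unfolding unit_cone_def radial_cone_def by (auto simp: subset_iff) blast
  then show ?thesis
    using \<rho> by (auto simp: mem_radial_cone[OF A] divide_le_eq inverse_eq_divide)
qed

lemma radial_cone_Int_cball_eq_image:
  fixes A :: "'a::euclidean_space set"
  assumes A: "A \<subseteq> sphere 0 1" and \<rho>: "\<rho> > 0"
  shows "radial_cone A \<inter> cball 0 \<rho> = (\<lambda>x. \<rho> *\<^sub>R x + 0) ` unit_cone A"
proof -
  have "(\<lambda>x. \<rho> *\<^sub>R x + 0) ` S = (\<lambda>x. (1 / \<rho>) *\<^sub>R x) -` S" for S :: "'a set"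
  proof (intro set_eqI iffI)
    fix x assume "x \<in> (\<lambda>x. (1 / \<rho>) *\<^sub>R x) -` S"
    moreover have "x = \<rho> *\<^sub>R ((1 / \<rho>) *\<^sub>R x) + 0" using \<rho> by simp
    ultimately show "x \<in> (\<lambda>x. \<rho> *\<^sub>R x + 0) ` S" by blast
  qed (use \<rho> in auto)
  then show ?thesis using radial_cone_Int_cball_eq_vimage[OF assms] by simp
qed

lemma sets_lebesgue_radial_cone:
  fixes A :: "'a::euclidean_space set"
  assumes A: "A \<subseteq> sphere 0 1" "unit_cone A \<in> sets lebesgue"
  shows "\<rho> > 0 \<Longrightarrow> radial_cone A \<inter> cball 0 \<rho> \<in> sets lebesgue"
    and "radial_cone A \<in> sets lebesgue"
proof -
  show Int_cball: "radial_cone A \<inter> cball 0 \<rho> \<in> sets lebesgue" if "\<rho> > 0" for \<rho>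
    using measurable_sets[OF lebesgue_measurable_scaling A(2), of "1 / \<rho>"]
    by (simp only: radial_cone_Int_cball_eq_vimage[OF A(1) that] space_completion space_lborel
        space_borel Int_UNIV_right)
  have union: "radial_cone A = (\<Union>n. radial_cone A \<inter> cball 0 (Suc n))"
  proof (intro set_eqI iffI)
    fix y assume "y \<in> radial_cone A"
    moreover obtain n where "norm y \<le> real n" using real_arch_simple by blast
    ultimately show "y \<in> (\<Union>n. radial_cone A \<inter> cball 0 (Suc n))" by (auto intro!: exI[of _ n])
  qed auto
  show "radial_cone A \<in> sets lebesgue"
    by (subst union, rule sets.countable_UN) (auto intro: Int_cball)
qed

lemma emeasure_radial_cone_Int_cball:
  fixes A :: "'a::euclidean_space set"
  assumes A: "A \<subseteq> sphere 0 1" and \<rho>: "\<rho> > 0"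
  shows "emeasure lebesgue (radial_cone A \<inter> cball 0 \<rho>)
       = ennreal (\<rho> ^ DIM('a) * measure lebesgue (unit_cone A))"
proof -
  have "unit_cone A \<subseteq> cball 0 1"
    using A unfolding unit_cone_def by (auto simp: subset_iff)
  then have "emeasure lebesgue (unit_cone A) \<le> emeasure lebesgue (cball (0::'a) 1)"
    by (rule emeasure_mono) (rule fmeasurableD[OF lmeasurable_cball])
  also have "\<dots> < \<infinity>" using lmeasurable_cball[of 0 1] unfolding fmeasurable_def by blast
  finally have "emeasure lebesgue (unit_cone A) = ennreal (measure lebesgue (unit_cone A))"
    by (intro emeasure_eq_ennreal_measure) (simp add: less_top[symmetric] del: emeasure_completion)
  moreover have "emeasure lebesgue (radial_cone A \<inter> cball 0 \<rho>) = ennreal (\<rho> ^ DIM('a)) * emeasure lebesgue (unit_cone A)"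
    using emeasure_lebesgue_affine[of \<rho> 0 "unit_cone A"] \<rho>
    by (simp only: radial_cone_Int_cball_eq_image[OF A \<rho>] abs_of_pos)
  ultimately show ?thesis using \<rho> by (simp add: ennreal_mult'')
qed

lemma emeasure_radial_cone_shell:
  fixes A :: "'a::euclidean_space set"
  assumes A: "A \<subseteq> sphere 0 1" "unit_cone A \<in> sets lebesgue" and R: "0 < R" "R \<le> \<rho>"
  shows "emeasure lebesgue ((radial_cone A - cball 0 R) \<inter> cball 0 \<rho>)
       = ennreal (measure lebesgue (unit_cone A) * (\<rho> ^ DIM('a) - R ^ DIM('a)))"
proof -
  define L where "L = measure lebesgue (unit_cone A)"
  define C where "C r = radial_cone A \<inter> cball 0 r" for r
  have \<rho>: "\<rho> > 0" using R by linarith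
  have C_meas: "C r \<in> sets lebesgue" and C_emeasure: "emeasure lebesgue (C r) = ennreal (r ^ DIM('a) * L)"
    if "r > 0" for r
    using sets_lebesgue_radial_cone(1)[OF A that] emeasure_radial_cone_Int_cball[OF A(1) that]
    by (simp_all only: C_def L_def)
  have "(radial_cone A - cball 0 R) \<inter> cball 0 \<rho> = C \<rho> - C R"
    by (auto simp: C_def)
  moreover have "emeasure lebesgue (C \<rho> - C R) = emeasure lebesgue (C \<rho>) - emeasure lebesgue (C R)"
    using C_meas[OF \<rho>] C_meas[OF R(1)] C_emeasure[OF R(1)] R(2)
    by (intro emeasure_Diff) (auto simp: C_def)
  moreover have "ennreal (\<rho> ^ DIM('a) * L) - ennreal (R ^ DIM('a) * L) = ennreal (L * (\<rho> ^ DIM('a) - R ^ DIM('a)))"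
    using R by (subst ennreal_minus) (auto simp: L_def algebra_simps intro!: mult_right_mono power_mono)
  ultimately show ?thesis
    using C_emeasure[OF \<rho>] C_emeasure[OF R(1)] by (simp only: L_def)
qed

section \<open>Layer-cake lower bound\<close>

text \<open>The cone over \<open>A\<close> is only Lebesgue measurable, so Tonelli is applied on \<open>lebesgue\<close>.\<close>

lemma sigma_finite_lebesgue: "sigma_finite_measure (lebesgue :: 'a::euclidean_space measure)"
  unfolding sigma_finite_measure_def
proof (intro exI[of _ "range (\<lambda>n. cball (0::'a) (real n))"] conjI ballI)
  show "range (\<lambda>n. cball (0::'a) (real n)) \<subseteq> sets lebesgue"
    using lmeasurable_cball by auto
  show "\<Union> (range (\<lambda>n. cball (0::'a) (real n))) = space lebesgue"
    by (auto simp: real_arch_simple)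
  show "emeasure lebesgue a \<noteq> \<infinity>" if "a \<in> range (\<lambda>n. cball (0::'a) (real n))" for a
    using that fmeasurableD2[OF lmeasurable_cball] unfolding infinity_ennreal_def by blast
qed auto

lemma nn_integral_exp_tail_le:
  fixes c a :: real
  assumes c: "c > 0"
  shows "(\<integral>\<^sup>+u. ennreal (c * exp (- c * u)) * indicator {0..} u * indicator {a..} u \<partial>lborel)
       \<le> ennreal (exp (- c * a))"
proof -
  define b where "b = max 0 a"
  have "((\<lambda>u. c * exp (- c * u)) has_integral c * (exp (- c * b) / c)) {b..}"
    by (rule has_integral_mult_right[OF has_integral_exp_minus_to_infinity[OF c]])
  then have "((\<lambda>u. c * exp (- c * u)) has_integral exp (- c * b)) {b..}" using c by simp
  from nn_integral_has_integral_lebesgue'[OF _ this]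
  have "(\<integral>\<^sup>+u. ennreal (c * exp (- c * u)) * indicator {b..} u \<partial>lborel) = ennreal (exp (- c * b))"
    using c by simp
  moreover have "indicator {0..} u * indicator {a..} u = (indicator {b..} u :: ennreal)" for u
    by (auto simp: b_def indicator_def)
  moreover have "exp (- c * b) \<le> exp (- c * a)" using c by (simp add: b_def)
  ultimately show ?thesis by (simp add: mult.assoc ennreal_leI)
qed

lemma nn_integral_exp_powr_eq_Gamma:
  fixes c p :: real
  assumes c: "c > 0" and p: "p \<ge> 0"
  shows "(\<integral>\<^sup>+u. ennreal (c * exp (- c * u)) * indicator {0..} u * ennreal (u powr p) \<partial>lborel)
       = ennreal (Gamma (p + 1) / c powr p)"
proof -
  define f where "f t = ennreal (indicator {0..} t * t powr p / exp t)" for t :: real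
  have f_meas: "f \<in> borel_measurable borel" unfolding f_def by measurable
  have pointwise: "ennreal (c * exp (- c * u)) * indicator {0..} u * ennreal (u powr p)
      = ennreal (c powr (- p)) * (ennreal c * f (0 + c * u))" for u
  proof (cases "u \<ge> 0")
    case True
    have "c * exp (- c * u) * u powr p = c powr (- p) * (c * ((c * u) powr p / exp (c * u)))"
      using c True by (simp add: powr_mult powr_minus exp_minus field_simps)
    then show ?thesis using True c unfolding f_def
      by (simp add: ennreal_mult'' [symmetric])
  next
    case False
    then show ?thesis using c unfolding f_def by (simp add: indicator_def zero_le_mult_iff)
  qed
  have "(\<integral>\<^sup>+u. ennreal (c * exp (- c * u)) * indicator {0..} u * ennreal (u powr p) \<partial>lborel)
      = (\<integral>\<^sup>+u. ennreal (c powr (- p)) * (ennreal c * f (0 + c * u)) \<partial>lborel)"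
    by (simp only: pointwise)
  also have "\<dots> = ennreal (c powr (- p)) * (ennreal c * (\<integral>\<^sup>+u. f (0 + c * u) \<partial>lborel))"
    using f_meas by (simp add: nn_integral_cmult)
  also have "ennreal c * (\<integral>\<^sup>+u. f (0 + c * u) \<partial>lborel) = ennreal (Gamma (p + 1))"
    using Gamma_conv_nn_integral_real[of "p + 1"] nn_integral_real_affine[OF f_meas, of c 0] c p
    by (simp add: f_def)
  also have "ennreal (c powr (- p)) * ennreal (Gamma (p + 1)) = ennreal (Gamma (p + 1) / c powr p)"
    using c p by (simp add: ennreal_mult'' [symmetric] powr_minus divide_inverse mult.commute)
  finally show ?thesis .
qed

lemma nn_integral_exp_powr_ge:
  fixes c p L :: real and g :: "real \<Rightarrow> ennreal"
  assumes c: "c > 0" and p: "p \<ge> 0" and L: "L \<ge> 0"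
    and g: "\<And>u. u \<ge> 0 \<Longrightarrow> ennreal (L * u powr p) \<le> g u"
  shows "ennreal (L * Gamma (p + 1) / c powr p)
       \<le> (\<integral>\<^sup>+u. ennreal (c * exp (- c * u)) * indicator {0..} u * g u \<partial>lborel)"
proof -
  have "ennreal (L * Gamma (p + 1) / c powr p) = ennreal L * ennreal (Gamma (p + 1) / c powr p)"
    using L c p Gamma_real_pos[of "p + 1"] by (subst ennreal_mult[symmetric]) auto
  also have "\<dots> = (\<integral>\<^sup>+u. ennreal L * (ennreal (c * exp (- c * u)) * indicator {0..} u * ennreal (u powr p)) \<partial>lborel)"
    by (simp only: nn_integral_exp_powr_eq_Gamma[OF c p, symmetric]) (rule nn_integral_cmult[symmetric], simp)
  also have "\<dots> \<le> (\<integral>\<^sup>+u. ennreal (c * exp (- c * u)) * indicator {0..} u * g u \<partial>lborel)"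
  proof (intro nn_integral_mono)
    fix u :: real
    show "ennreal L * (ennreal (c * exp (- c * u)) * indicator {0..} u * ennreal (u powr p))
        \<le> ennreal (c * exp (- c * u)) * indicator {0..} u * g u"
    proof (cases "u \<ge> 0")
      case True
      then have "ennreal L * (ennreal (c * exp (- c * u)) * indicator {0..} u * ennreal (u powr p))
          = ennreal (c * exp (- c * u)) * indicator {0..} u * ennreal (L * u powr p)"
        using L by (simp add: ennreal_mult mult_ac)
      also have "\<dots> \<le> ennreal (c * exp (- c * u)) * indicator {0..} u * g u"
        using g[OF True] by (rule mult_left_mono) simp
      finally show ?thesis .
    qed simp
  qed
  finally show ?thesis .
qed

lemma nn_integral_exp_ge_of_sublevel_emeasure_ge:
  fixes M :: "'a measure" and \<phi> :: "'a \<Rightarrow> real"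
  assumes M: "sigma_finite_measure M" and C[measurable]: "C \<in> sets M"
    and \<phi>[measurable]: "\<phi> \<in> borel_measurable M"
    and c: "c > 0" and p: "p \<ge> 0" and L: "L \<ge> 0"
    and sublevel: "\<And>u. u \<ge> 0 \<Longrightarrow> ennreal (L * u powr p) \<le> emeasure M {y \<in> C. \<phi> y \<le> u}"
  shows "ennreal (L * Gamma (p + 1) / c powr p) \<le> (\<integral>\<^sup>+y. indicator C y * ennreal (exp (- c * \<phi> y)) \<partial>M)"
proof -
  interpret M_lborel: pair_sigma_finite M lborel
    using M by (simp add: pair_sigma_finite_def sigma_finite_lborel)
  define k where "k u = ennreal (c * exp (- c * u)) * indicator {0..} u" for u :: real
  define F where "F z = indicator C (fst z) * (k (snd z) * indicator {z. \<phi> (fst z) \<le> snd z} z)"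
    for z :: "'a \<times> real"
  have [measurable]: "k \<in> borel_measurable borel" unfolding k_def by measurable
  have F_meas: "F \<in> borel_measurable (M \<Otimes>\<^sub>M lborel)" unfolding F_def by measurable
  txt \<open>\<open>exp (- c * \<phi> y)\<close> dominates the integral of \<open>c * exp (- c * u)\<close> over \<open>u \<ge> max 0 (\<phi> y)\<close>;
    integrating over \<open>y\<close> first turns this into the sublevel measures.\<close>
  have "ennreal (L * Gamma (p + 1) / c powr p) \<le> (\<integral>\<^sup>+u. k u * emeasure M {y \<in> C. \<phi> y \<le> u} \<partial>lborel)"
    unfolding k_def by (rule nn_integral_exp_powr_ge[OF c p L sublevel])
  also have "\<dots> = (\<integral>\<^sup>+u. (\<integral>\<^sup>+y. F (y, u) \<partial>M) \<partial>lborel)"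
  proof (intro nn_integral_cong)
    fix u
    have "(\<integral>\<^sup>+y. F (y, u) \<partial>M) = (\<integral>\<^sup>+y. k u * indicator {y \<in> C. \<phi> y \<le> u} y \<partial>M)"
      unfolding F_def by (intro nn_integral_cong) (auto simp: indicator_def)
    then show "k u * emeasure M {y \<in> C. \<phi> y \<le> u} = (\<integral>\<^sup>+y. F (y, u) \<partial>M)"
      by (simp add: nn_integral_cmult_indicator)
  qed
  also have "\<dots> = (\<integral>\<^sup>+y. (\<integral>\<^sup>+u. F (y, u) \<partial>lborel) \<partial>M)"
    using M_lborel.Fubini[OF F_meas] by simp
  also have "\<dots> \<le> (\<integral>\<^sup>+y. indicator C y * ennreal (exp (- c * \<phi> y)) \<partial>M)"
  proof (intro nn_integral_mono)
    fix y
    have "(\<integral>\<^sup>+u. F (y, u) \<partial>lborel) = indicator C y * (\<integral>\<^sup>+u. k u * indicator {\<phi> y..} u \<partial>lborel)"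
      unfolding F_def by (subst nn_integral_cmult[symmetric]) (auto intro!: nn_integral_cong simp: indicator_def)
    also have "\<dots> \<le> indicator C y * ennreal (exp (- c * \<phi> y))"
      unfolding k_def by (intro mult_left_mono nn_integral_exp_tail_le[OF c]) simp
    finally show "(\<integral>\<^sup>+u. F (y, u) \<partial>lborel) \<le> indicator C y * ennreal (exp (- c * \<phi> y))" .
  qed
  finally show ?thesis .
qed

section \<open>Gaussian mass of a truncated cone\<close>

lemma power_add_ge_add_power:
  fixes R w :: real
  assumes "R \<ge> 0" "w \<ge> 0" "n \<ge> 1"
  shows "R ^ n + w ^ n \<le> (R + w) ^ n"
proof -
  obtain m where n: "n = Suc m" using assms(3) by (cases n) auto
  have "R ^ m * R + w ^ m * w \<le> (R + w) ^ m * R + (R + w) ^ m * w"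
    using assms by (intro add_mono mult_right_mono power_mono) auto
  then show ?thesis by (simp add: n algebra_simps)
qed

lemma sqrt_power_le_sqrt_add_power_diff:
  fixes R u :: real
  assumes "R \<ge> 0" "u \<ge> 0" "n \<ge> 2"
  shows "sqrt u ^ n \<le> sqrt (R\<^sup>2 + u) ^ n - R ^ n"
proof -
  obtain m where n: "n = Suc (Suc m)" using assms(3) by (metis add_2_eq_Suc le_Suc_ex)
  define s where "s = sqrt (R\<^sup>2 + u)"
  define w where "w = sqrt u"
  have s2: "s\<^sup>2 = R\<^sup>2 + w\<^sup>2" using assms by (simp add: s_def w_def)
  have "R \<le> s" "w \<le> s" "0 \<le> w"
    using assms by (auto simp: s_def w_def real_le_rsqrt intro: real_sqrt_le_mono)
  then have "R ^ m * R\<^sup>2 + w ^ m * w\<^sup>2 \<le> s ^ m * R\<^sup>2 + s ^ m * w\<^sup>2"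
    using assms by (intro add_mono mult_right_mono power_mono) auto
  also have "\<dots> = s ^ m * s\<^sup>2" by (simp add: s2 algebra_simps)
  also have "\<dots> = s ^ n" by (simp add: n power2_eq_square mult_ac)
  finally have "R ^ n + w ^ n \<le> s ^ n" by (simp add: n power2_eq_square mult_ac)
  then show ?thesis by (simp add: s_def w_def)
qed

lemma sqrt_power_eq_powr:
  fixes u :: real
  assumes "u > 0"
  shows "sqrt u ^ n = u powr (real n / 2)"
  using assms by (simp add: powr_half_sqrt[symmetric] powr_realpow[symmetric] powr_powr)

lemma emeasure_radial_cone_sublevel_ge:
  fixes A :: "'a::euclidean_space set" and \<phi> :: "'a \<Rightarrow> real"
  assumes A: "A \<subseteq> sphere 0 1" "unit_cone A \<in> sets lebesgue" and R: "0 < R" "R \<le> \<rho>"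
    and u: "u \<ge> 0" and shell: "sqrt u ^ DIM('a) \<le> \<rho> ^ DIM('a) - R ^ DIM('a)"
    and sublevel_iff: "\<And>y. y \<in> radial_cone A - cball 0 R \<Longrightarrow> \<phi> y \<le> u \<longleftrightarrow> norm y \<le> \<rho>"
  shows "ennreal (measure lebesgue (unit_cone A) * u powr (DIM('a) / 2))
       \<le> emeasure lebesgue {y \<in> radial_cone A - cball 0 R. \<phi> y \<le> u}"
proof (cases "u = 0")
  case False
  have "{y \<in> radial_cone A - cball 0 R. \<phi> y \<le> u} = (radial_cone A - cball 0 R) \<inter> cball 0 \<rho>"
    using sublevel_iff unfolding set_eq_iff mem_Collect_eq Int_iff mem_cball_0 by blast
  moreover have "measure lebesgue (unit_cone A) * u powr (DIM('a) / 2)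
      \<le> measure lebesgue (unit_cone A) * (\<rho> ^ DIM('a) - R ^ DIM('a))"
    using sqrt_power_eq_powr[of u "DIM('a)"] u False shell by (intro mult_left_mono) auto
  ultimately show ?thesis by (simp only: emeasure_radial_cone_shell[OF A R] ennreal_leI)
qed simp

lemma power2_sum_le_weighted:
  fixes R w \<theta> :: real
  assumes \<theta>: "\<theta> > 1"
  shows "(R + w)\<^sup>2 \<le> \<theta> * R\<^sup>2 + \<theta> / (\<theta> - 1) * w\<^sup>2"
proof -
  have "0 \<le> ((\<theta> - 1) * R - w)\<^sup>2 / (\<theta> - 1)" using \<theta> by simp
  also have "((\<theta> - 1) * R - w)\<^sup>2 / (\<theta> - 1) = \<theta> * R\<^sup>2 + \<theta> / (\<theta> - 1) * w\<^sup>2 - (R + w)\<^sup>2"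
    using \<theta> by (simp add: field_simps power2_eq_square)
  finally show ?thesis by simp
qed

lemma ennreal_mult_le_nn_integral:
  fixes M :: "'a measure"
  assumes K: "ennreal K \<le> (\<integral>\<^sup>+y. f y \<partial>M)" "K \<ge> 0"
    and a: "a \<ge> 0" and f: "f \<in> borel_measurable M" and le: "\<And>y. ennreal a * f y \<le> g y"
  shows "ennreal (a * K) \<le> (\<integral>\<^sup>+y. g y \<partial>M)"
proof -
  have "ennreal (a * K) \<le> ennreal a * (\<integral>\<^sup>+y. f y \<partial>M)"
    using K a by (simp add: ennreal_mult mult_left_mono)
  also have "\<dots> = (\<integral>\<^sup>+y. ennreal a * f y \<partial>M)" using f by (simp add: nn_integral_cmult)
  also have "\<dots> \<le> (\<integral>\<^sup>+y. g y \<partial>M)" using le by (intro nn_integral_mono)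
  finally show ?thesis .
qed

lemma nn_integral_radial_cone_gaussian_ge:
  fixes A :: "'a::euclidean_space set"
  assumes A: "A \<subseteq> sphere 0 1" "unit_cone A \<in> sets lebesgue"
    and R: "R > 0" and c: "c > 0" and d: "DIM('a) \<ge> 2"
  shows "ennreal (exp (- c * R\<^sup>2) * (measure lebesgue (unit_cone A) * Gamma (DIM('a) / 2 + 1) / c powr (DIM('a) / 2)))
       \<le> (\<integral>\<^sup>+y. indicator (radial_cone A - cball 0 R) y * ennreal (exp (- c * (norm y)\<^sup>2)) \<partial>lebesgue)"
proof -
  define L where "L = measure lebesgue (unit_cone A)"
  define C where "C = radial_cone A - cball 0 R"
  define \<phi> where "\<phi> y = (norm y)\<^sup>2 - R\<^sup>2" for y :: 'a
  have C_meas[measurable]: "C \<in> sets lebesgue"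
    using sets_lebesgue_radial_cone(2)[OF A] by (auto simp: C_def)
  have \<phi>_meas[measurable]: "\<phi> \<in> borel_measurable lebesgue"
    unfolding \<phi>_def by (intro measurable_completion) measurable
  have "ennreal (L * Gamma (DIM('a) / 2 + 1) / c powr (DIM('a) / 2))
      \<le> (\<integral>\<^sup>+y. indicator C y * ennreal (exp (- c * \<phi> y)) \<partial>lebesgue)"
  proof (rule nn_integral_exp_ge_of_sublevel_emeasure_ge[OF sigma_finite_lebesgue C_meas \<phi>_meas c])
    show "ennreal (L * u powr (DIM('a) / 2)) \<le> emeasure lebesgue {y \<in> C. \<phi> y \<le> u}"
      if u: "u \<ge> 0" for u
      unfolding C_def L_def
    proof (rule emeasure_radial_cone_sublevel_ge[OF A R _ u])
      show "R \<le> sqrt (R\<^sup>2 + u)" using u R by (simp add: real_le_rsqrt)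
      show "sqrt u ^ DIM('a) \<le> sqrt (R\<^sup>2 + u) ^ DIM('a) - R ^ DIM('a)"
        using sqrt_power_le_sqrt_add_power_diff[of R u "DIM('a)"] u R d by simp
      show "\<phi> y \<le> u \<longleftrightarrow> norm y \<le> sqrt (R\<^sup>2 + u)" for y
        using real_sqrt_le_iff[of "(norm y)\<^sup>2" "R\<^sup>2 + u"] by (simp add: \<phi>_def) linarith
    qed
  qed (auto simp: L_def)
  then show ?thesis
    unfolding C_def[symmetric] L_def[symmetric]
  proof (rule ennreal_mult_le_nn_integral)
    show "0 \<le> L * Gamma (DIM('a) / 2 + 1) / c powr (DIM('a) / 2)"
      by (intro divide_nonneg_nonneg mult_nonneg_nonneg) (auto simp: L_def intro: less_imp_le)
    show "ennreal (exp (- c * R\<^sup>2)) * (indicator C y * ennreal (exp (- c * \<phi> y)))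
        \<le> indicator C y * ennreal (exp (- c * (norm y)\<^sup>2))" for y
      by (simp add: \<phi>_def indicator_def ennreal_mult[symmetric] algebra_simps flip: exp_add)
  qed auto
qed

text \<open>Needed in dimension one, where \<open>sqrt (R\<^sup>2 + u) - R\<close> is not bounded below by \<open>sqrt u\<close>:
  the weight is compared with a Gaussian centred on the sphere of radius \<open>R\<close> instead.\<close>

lemma nn_integral_radial_cone_gaussian_ge_weighted:
  fixes A :: "'a::euclidean_space set"
  assumes A: "A \<subseteq> sphere 0 1" "unit_cone A \<in> sets lebesgue"
    and R: "R > 0" and c: "c > 0" and \<theta>: "\<theta> > 1"
  shows "ennreal (exp (- \<theta> * c * R\<^sup>2) * (measure lebesgue (unit_cone A) * Gamma (DIM('a) / 2 + 1)
           / (c * \<theta> / (\<theta> - 1)) powr (DIM('a) / 2)))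
       \<le> (\<integral>\<^sup>+y. indicator (radial_cone A - cball 0 R) y * ennreal (exp (- c * (norm y)\<^sup>2)) \<partial>lebesgue)"
proof -
  define L where "L = measure lebesgue (unit_cone A)"
  define C where "C = radial_cone A - cball 0 R"
  define c' where "c' = c * \<theta> / (\<theta> - 1)"
  define \<phi> where "\<phi> y = (norm y - R)\<^sup>2" for y :: 'a
  have c': "c' > 0" using c \<theta> by (simp add: c'_def)
  have C_meas[measurable]: "C \<in> sets lebesgue"
    using sets_lebesgue_radial_cone(2)[OF A] by (auto simp: C_def)
  have \<phi>_meas[measurable]: "\<phi> \<in> borel_measurable lebesgue"
    unfolding \<phi>_def by (intro measurable_completion) measurable
  have "ennreal (L * Gamma (DIM('a) / 2 + 1) / c' powr (DIM('a) / 2))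
      \<le> (\<integral>\<^sup>+y. indicator C y * ennreal (exp (- c' * \<phi> y)) \<partial>lebesgue)"
  proof (rule nn_integral_exp_ge_of_sublevel_emeasure_ge[OF sigma_finite_lebesgue C_meas \<phi>_meas c'])
    show "ennreal (L * u powr (DIM('a) / 2)) \<le> emeasure lebesgue {y \<in> C. \<phi> y \<le> u}"
      if u: "u \<ge> 0" for u
      unfolding C_def L_def
    proof (rule emeasure_radial_cone_sublevel_ge[OF A R _ u])
      show "R \<le> R + sqrt u" using u by simp
      show "sqrt u ^ DIM('a) \<le> (R + sqrt u) ^ DIM('a) - R ^ DIM('a)"
        using power_add_ge_add_power[of R "sqrt u" "DIM('a)"] u R by (simp add: Suc_le_eq)
      show "\<phi> y \<le> u \<longleftrightarrow> norm y \<le> R + sqrt u" if "y \<in> radial_cone A - cball 0 R" for y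
        using that real_sqrt_le_iff[of "(norm y - R)\<^sup>2" u] by (auto simp: \<phi>_def)
    qed
  qed (auto simp: L_def)
  then show ?thesis
    unfolding C_def[symmetric] L_def[symmetric] c'_def[symmetric]
  proof (rule ennreal_mult_le_nn_integral)
    show "0 \<le> L * Gamma (DIM('a) / 2 + 1) / c' powr (DIM('a) / 2)"
      by (intro divide_nonneg_nonneg mult_nonneg_nonneg) (auto simp: L_def intro: less_imp_le)
    show "ennreal (exp (- \<theta> * c * R\<^sup>2)) * (indicator C y * ennreal (exp (- c' * \<phi> y)))
        \<le> indicator C y * ennreal (exp (- c * (norm y)\<^sup>2))" for y
    proof (cases "y \<in> C")
      case True
      have "c * (norm y)\<^sup>2 = c * (R + (norm y - R))\<^sup>2" by simp
      also have "\<dots> \<le> c * (\<theta> * R\<^sup>2 + \<theta> / (\<theta> - 1) * (norm y - R)\<^sup>2)"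
        using power2_sum_le_weighted[OF \<theta>, of R "norm y - R"] c by (intro mult_left_mono) auto
      also have "\<dots> = \<theta> * c * R\<^sup>2 + c' * \<phi> y" by (simp add: c'_def \<phi>_def algebra_simps)
      finally have "exp (- \<theta> * c * R\<^sup>2) * exp (- c' * \<phi> y) \<le> exp (- c * (norm y)\<^sup>2)"
        by (simp flip: exp_add)
      then show ?thesis using True by (simp add: ennreal_mult[symmetric] ennreal_leI)
    qed simp
  qed auto
qed

lemma sin_ge_jordan:
  fixes x :: real
  assumes "0 \<le> x" "x \<le> pi / 2"
  shows "2 / pi * x \<le> sin x"
proof -
  have "convex_on {0..pi/2} (\<lambda>x. - sin x)"
  proof (rule convex_on_realI[where f'="\<lambda>x. - cos x"])
    show "((\<lambda>x. - sin x) has_real_derivative - cos x) (at x)" for x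
      by (auto intro!: derivative_eq_intros)
    show "- cos x \<le> - cos y" if "x \<in> {0..pi/2}" "y \<in> {0..pi/2}" "x \<le> y" for x y
      using that by (simp add: cos_monotone_0_pi_le)
  qed simp
  moreover have t: "0 \<le> 2 / pi * x" "2 / pi * x \<le> 1"
    using assms pi_gt_zero by (auto simp: field_simps)
  ultimately have "- sin ((1 - 2 / pi * x) *\<^sub>R 0 + (2 / pi * x) *\<^sub>R (pi/2))
      \<le> (1 - 2 / pi * x) * (- sin 0) + (2 / pi * x) * (- sin (pi/2))"
    by (intro convex_onD) auto
  then show ?thesis by simp
qed

lemma arccos_inverse_sqrt_le:
  fixes \<theta> :: real
  assumes \<theta>: "\<theta> > 1"
  shows "arccos (\<theta> powr (-1/2)) \<le> pi / 2 * sqrt ((\<theta> - 1) / \<theta>)"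
proof -
  define y where "y = \<theta> powr (-1/2)"
  have y: "y = inverse (sqrt \<theta>)"
    using \<theta> by (simp add: y_def powr_minus powr_half_sqrt)
  then have y_bounds: "0 < y" "y \<le> 1" using \<theta> by (auto simp: inverse_le_1_iff)
  define x where "x = arccos y"
  have x: "0 \<le> x" "x \<le> pi / 2"
    using y_bounds arccos_lbound[of y] arccos_le_pi2[of y] by (auto simp: x_def)
  have "sin x = sqrt (1 - y\<^sup>2)" unfolding x_def using y_bounds by (intro sin_arccos) auto
  also have "1 - y\<^sup>2 = (\<theta> - 1) / \<theta>" using \<theta> by (simp add: y field_simps)
  finally have "sin x = sqrt ((\<theta> - 1) / \<theta>)" .
  with sin_ge_jordan[OF x] show ?thesis by (simp add: x_def y_def field_simps)
qed

lemma Gamma_of_nat_plus_half: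
  "Gamma (real k + 1/2) = (\<Prod>j = 1..k. (real j - 1/2)) * sqrt pi"
proof (induction k)
  case 0
  then show ?case by (simp add: Gamma_one_half_real)
next
  case (Suc k)
  have "real k + 1/2 \<notin> \<int>\<^sub>\<le>\<^sub>0" using nonpos_Ints_nonpos by force
  then have "Gamma (real (Suc k) + 1/2) = (real k + 1/2) * Gamma (real k + 1/2)"
    using Gamma_plus1[of "real k + 1/2"] by (simp add: algebra_simps)
  then show ?case using Suc by (simp add: prod.nat_ivl_Suc' algebra_simps)
qed

lemma nn_integral_radial_cone_gaussian_ge_even:
  fixes A :: "'a::euclidean_space set"
  assumes A: "A \<subseteq> sphere 0 1" "unit_cone A \<in> sets lebesgue"
    and R: "R > 0" and c: "c > 0" and d: "even DIM('a)"
  shows "ennreal (sphere_measure A * fact (DIM('a) div 2 - 1) / 2 / c powr (DIM('a) / 2) * exp (- c * R\<^sup>2))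
       \<le> (\<integral>\<^sup>+y. indicator (radial_cone A - cball 0 R) y * ennreal (exp (- c * (norm y)\<^sup>2)) \<partial>lebesgue)"
proof -
  obtain k where k: "DIM('a) = 2 * k" using d by blast
  then have "k \<ge> 1" using DIM_positive[where 'a='a] by linarith
  then have "sphere_measure A * fact (DIM('a) div 2 - 1) / 2
      = measure lebesgue (unit_cone A) * Gamma (DIM('a) / 2 + 1)"
    using k fact_reduce[where 'a=real, of k] Gamma_fact[where 'a=real, of k]
    by (simp add: sphere_measure_def add.commute)
  then show ?thesis
    using nn_integral_radial_cone_gaussian_ge[OF A R c] k \<open>k \<ge> 1\<close>
    by (simp add: field_simps)
qed

lemma nn_integral_radial_cone_gaussian_ge_odd:
  fixes A :: "'a::euclidean_space set"
  assumes A: "A \<subseteq> sphere 0 1" "unit_cone A \<in> sets lebesgue"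
    and R: "R > 0" and c: "c > 0" and d: "odd DIM('a)" and \<theta>: "\<theta> > 1"
  shows "ennreal (arccos (\<theta> powr (-1/2)) *
           (sphere_measure A * (\<Prod>j = 1..(DIM('a) - 1) div 2. (real j - 1/2)) / sqrt pi)
           / c powr (DIM('a) / 2) * exp (- \<theta> * c * R\<^sup>2))
       \<le> (\<integral>\<^sup>+y. indicator (radial_cone A - cball 0 R) y * ennreal (exp (- c * (norm y)\<^sup>2)) \<partial>lebesgue)"
proof -
  define L where "L = measure lebesgue (unit_cone A)"
  obtain k where k: "DIM('a) = 2 * k + 1" using d oddE by blast
  define P where "P = (\<Prod>j = 1..k. (real j - 1/2))"
  define a where "a = arccos (\<theta> powr (-1/2))"
  define q where "q = sqrt ((\<theta> - 1) / \<theta>)"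
  define X where "X = L * P / c powr (DIM('a) / 2)"
  have X: "X \<ge> 0" unfolding X_def P_def L_def by (intro divide_nonneg_nonneg mult_nonneg_nonneg prod_nonneg) auto
  have q: "0 < q" "q \<le> 1" using \<theta> by (auto simp: q_def)
  have a: "0 \<le> a" "a \<le> pi / 2 * q"
    using \<theta> arccos_inverse_sqrt_le[OF \<theta>] powr_less_one[of \<theta> "-1/2"]
    by (auto simp: a_def q_def intro!: arccos_lbound order_trans[OF _ powr_ge_zero])
  have "a * (2 * real k + 1) / sqrt pi \<le> pi / 2 * q * (2 * real k + 1) / sqrt pi"
    using a by (intro divide_right_mono mult_right_mono) auto
  also have "\<dots> = (real k + 1/2) * (pi / sqrt pi) * q" by (simp add: field_simps)
  finally have a_bound: "a * (2 * real k + 1) / sqrt pi \<le> (real k + 1/2) * sqrt pi * q"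
    by (simp add: real_div_sqrt)
  have lhs: "arccos (\<theta> powr (-1/2)) * (sphere_measure A * (\<Prod>j = 1..(DIM('a) - 1) div 2. (real j - 1/2)) / sqrt pi)
      / c powr (DIM('a) / 2) * exp (- \<theta> * c * R\<^sup>2)
      = a * (2 * real k + 1) / sqrt pi * X * exp (- \<theta> * c * R\<^sup>2)"
    using k by (simp add: a_def L_def P_def X_def sphere_measure_def field_simps)
  have "real k + 1/2 \<notin> \<int>\<^sub>\<le>\<^sub>0" using nonpos_Ints_nonpos by force
  then have Gamma: "Gamma (DIM('a) / 2 + 1) = (real k + 1/2) * P * sqrt pi"
    using Gamma_plus1[of "real k + 1/2"] k by (simp add: Gamma_of_nat_plus_half P_def add_divide_distrib)
  show ?thesis
  proof (cases "k = 0")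
    case True
    have d1: "real DIM('a) / 2 = 1/2" using True k by simp
    have W: "(c * \<theta> / (\<theta> - 1)) powr (DIM('a) / 2) = c powr (DIM('a) / 2) / q"
      using c \<theta> by (simp add: d1 powr_half_sqrt q_def real_sqrt_divide real_sqrt_mult field_simps)
    have "a * (2 * real k + 1) / sqrt pi * X * exp (- \<theta> * c * R\<^sup>2)
        \<le> (real k + 1/2) * sqrt pi * q * X * exp (- \<theta> * c * R\<^sup>2)"
      using a_bound X by (intro mult_right_mono) auto
    also have "\<dots> = exp (- \<theta> * c * R\<^sup>2) * (L * Gamma (DIM('a) / 2 + 1) / (c * \<theta> / (\<theta> - 1)) powr (DIM('a) / 2))"
      unfolding W Gamma X_def using q c by (simp add: field_simps)
    finally show ?thesis
      using nn_integral_radial_cone_gaussian_ge_weighted[OF A R c \<theta>] unfolding lhs L_def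
      by (meson ennreal_leI order_trans)
  next
    case False
    have "exp (- \<theta> * c * R\<^sup>2) \<le> exp (- c * R\<^sup>2)"
      using mult_right_mono[of 1 \<theta> "c * R\<^sup>2"] \<theta> c by simp
    then have "a * (2 * real k + 1) / sqrt pi * X * exp (- \<theta> * c * R\<^sup>2)
        \<le> (real k + 1/2) * sqrt pi * X * exp (- c * R\<^sup>2)"
      using a_bound q X by (intro mult_mono) (auto intro: order_trans mult_left_le)
    also have "\<dots> = exp (- c * R\<^sup>2) * (L * Gamma (DIM('a) / 2 + 1) / c powr (DIM('a) / 2))"
      unfolding Gamma X_def by (simp add: field_simps)
    finally have le: "a * (2 * real k + 1) / sqrt pi * X * exp (- \<theta> * c * R\<^sup>2)
        \<le> exp (- c * R\<^sup>2) * (L * Gamma (DIM('a) / 2 + 1) / c powr (DIM('a) / 2))" .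
    have "DIM('a) \<ge> 2" using False k by simp
    from le nn_integral_radial_cone_gaussian_ge[OF A R c this] show ?thesis unfolding lhs L_def
      by (meson ennreal_leI order_trans)
  qed
qed

lemma G_cond_radial_cone_lower_bound:
  fixes f :: "'a::euclidean_space \<Rightarrow> real"
  assumes G: "G_cond \<rho>\<^sub>0 \<beta> f A" and bdd: "bdd_below ((\<lambda>s. f (\<rho>\<^sub>0 *\<^sub>R s)) ` sphere 0 1)"
    and y: "y \<in> radial_cone A" "norm y \<ge> \<rho>\<^sub>0"
  shows "(INF s \<in> sphere 0 1. f (\<rho>\<^sub>0 *\<^sub>R s)) + \<beta> * (norm y - \<rho>\<^sub>0) \<le> f y"
proof -
  from G have A: "A \<subseteq> sphere 0 1"
    and grow: "\<And>y. norm y \<ge> \<rho>\<^sub>0 \<Longrightarrow> y /\<^sub>R norm y \<in> A \<Longrightarrow>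
       \<beta> * norm (y - \<rho>\<^sub>0 *\<^sub>R (y /\<^sub>R norm y)) \<le> f y - f (\<rho>\<^sub>0 *\<^sub>R (y /\<^sub>R norm y))"
    unfolding G_cond_def by auto
  define s where "s = y /\<^sub>R norm y"
  have "y \<noteq> 0" "s \<in> A" using y(1) by (auto simp: s_def mem_radial_cone[OF A])
  then have s: "s \<in> sphere 0 1" "y = norm y *\<^sub>R s" using A by (auto simp: s_def)
  have "norm (y - \<rho>\<^sub>0 *\<^sub>R s) = norm ((norm y - \<rho>\<^sub>0) *\<^sub>R s)"
    by (subst (1) s(2)) (simp add: algebra_simps)
  also have "\<dots> = norm y - \<rho>\<^sub>0" using s(1) y(2) by simp
  finally have "\<beta> * (norm y - \<rho>\<^sub>0) \<le> f y - f (\<rho>\<^sub>0 *\<^sub>R s)"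
    using grow[OF y(2)] \<open>s \<in> A\<close> by (simp add: s_def)
  moreover have "(INF s \<in> sphere 0 1. f (\<rho>\<^sub>0 *\<^sub>R s)) \<le> f (\<rho>\<^sub>0 *\<^sub>R s)"
    using bdd s(1) by (rule cINF_lower2) simp
  ultimately show ?thesis by linarith
qed

lemma measure_density_ge_of_nn_integral_ge:
  fixes m g :: "'a::euclidean_space \<Rightarrow> real"
  assumes \<mu>: "prob_space (density lborel (\<lambda>x. ennreal (m x)))" and m[measurable]: "m \<in> borel_measurable lborel"
    and E[measurable]: "E \<in> sets borel" and C: "C \<subseteq> E" and c: "c > 0"
    and g_le: "\<And>y. y \<in> C \<Longrightarrow> g y \<le> c * m y"
    and K: "ennreal K \<le> (\<integral>\<^sup>+y. indicator C y * ennreal (g y) \<partial>lebesgue)"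
  shows "K / c \<le> measure (density lborel (\<lambda>x. ennreal (m x))) E"
proof (cases "K \<ge> 0")
  case True
  interpret prob_space "density lborel (\<lambda>x. ennreal (m x))" by (rule \<mu>)
  have "ennreal K \<le> (\<integral>\<^sup>+y. indicator C y * ennreal (g y) \<partial>lborel)"
    using K by (simp only: nn_integral_completion)
  also have "\<dots> \<le> (\<integral>\<^sup>+y. ennreal c * (ennreal (m y) * indicator E y) \<partial>lborel)"
  proof (intro nn_integral_mono)
    fix y
    have "ennreal (g y) \<le> ennreal c * ennreal (m y)" if "y \<in> C"
      using g_le[OF that] c by (simp add: ennreal_mult'[symmetric] ennreal_leI)
    then show "indicator C y * ennreal (g y) \<le> ennreal c * (ennreal (m y) * indicator E y)"
      using C by (auto simp: indicator_def)
  qed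
  also have "\<dots> = ennreal c * emeasure (density lborel (\<lambda>x. ennreal (m x))) E"
    by (simp add: nn_integral_cmult emeasure_density)
  also have "\<dots> = ennreal (c * measure (density lborel (\<lambda>x. ennreal (m x))) E)"
    using c by (simp add: emeasure_eq_measure ennreal_mult)
  finally show ?thesis using c by (simp add: pos_divide_le_eq mult.commute)
next
  case False
  then have "K / c \<le> 0" using c by (simp add: divide_nonpos_pos)
  also have "0 \<le> measure (density lborel (\<lambda>x. ennreal (m x))) E" by (rule measure_nonneg)
  finally show ?thesis .
qed

lemma measure_event_ge_cone_integral:
  fixes f m g :: "'a::euclidean_space \<Rightarrow> real"
  assumes \<mu>: "prob_space (density lborel (\<lambda>x. ennreal (m x)))" and m: "m \<in> borel_measurable lborel"
    and G: "G_cond \<rho>\<^sub>0 \<beta> f A" and \<beta>: "\<beta> > 0"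
    and bdd: "bdd_below ((\<lambda>s. f (\<rho>\<^sub>0 *\<^sub>R s)) ` sphere 0 1)"
    and E: "E \<in> sets borel" "\<And>y. (INF s \<in> sphere 0 1. f (\<rho>\<^sub>0 *\<^sub>R s)) - \<beta> * \<rho>\<^sub>0 + r \<le> f y \<Longrightarrow> y \<in> E"
    and c: "c > 0" and g: "\<And>y. norm y \<ge> \<rho>\<^sub>0 \<Longrightarrow> g y \<le> c * m y"
    and K: "ennreal K \<le> (\<integral>\<^sup>+y. indicator (radial_cone A - cball 0 (max (r / \<beta>) \<rho>\<^sub>0)) y * ennreal (g y) \<partial>lebesgue)"
  shows "K / c \<le> measure (density lborel (\<lambda>x. ennreal (m x))) E"
proof (rule measure_density_ge_of_nn_integral_ge[OF \<mu> m E(1) _ c _ K])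
  define R where "R = max (r / \<beta>) \<rho>\<^sub>0"
  have R: "\<rho>\<^sub>0 \<le> R" "r \<le> \<beta> * R" using \<beta> by (auto simp: R_def max_def field_simps)
  show "radial_cone A - cball 0 (max (r / \<beta>) \<rho>\<^sub>0) \<subseteq> E"
  proof
    fix y assume y: "y \<in> radial_cone A - cball 0 (max (r / \<beta>) \<rho>\<^sub>0)"
    then have "(INF s \<in> sphere 0 1. f (\<rho>\<^sub>0 *\<^sub>R s)) + \<beta> * (norm y - \<rho>\<^sub>0) \<le> f y"
      using R by (intro G_cond_radial_cone_lower_bound[OF G bdd]) (auto simp: R_def[symmetric])
    moreover have "r \<le> \<beta> * norm y"
      using y R \<beta> by (auto simp: R_def[symmetric] intro: order_trans mult_left_mono)
    ultimately show "y \<in> E" by (intro E(2)) (simp add: algebra_simps)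
  qed
  show "g y \<le> c * m y" if "y \<in> radial_cone A - cball 0 (max (r / \<beta>) \<rho>\<^sub>0)" for y
    using that R by (intro g) (auto simp: R_def[symmetric])
qed

theorem proposition3p3:
  fixes \<rho>\<^sub>0 \<beta> lam \<kappa> :: real
    and f V m :: "'a::euclidean_space \<Rightarrow> real"
    and gradV :: "'a \<Rightarrow> 'a"
    and H :: "'a \<Rightarrow> 'a \<Rightarrow>\<^sub>L 'a"
    and A :: "'a set"
  assumes rho0_pos: "\<rho>\<^sub>0 > 0" and beta_pos: "\<beta> > 0"
    and f_nonneg: "\<And>x. f x \<ge> 0"
    and f_lip: "1-lipschitz_on UNIV f"
    and f_G: "G_cond \<rho>\<^sub>0 \<beta> f A"
    and V_grad: "\<And>x. (V has_derivative (\<lambda>h. gradV x \<bullet> h)) (at x)"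
    and V_hess: "\<And>x. (gradV has_derivative blinfun_apply (H x)) (at x)"
    and H_cont: "continuous_on UNIV H"
    and V_int: "integrable lborel (\<lambda>x. exp (- V x))"
    and lambda_ge: "lam \<ge> 1"
    and hess_bounds: "\<And>x v. 0 \<le> v \<bullet> H x v \<and> v \<bullet> H x v \<le> lam * (norm v)\<^sup>2"
    and m_meas: "m \<in> borel_measurable lborel"
    and m_nonneg: "\<And>x. m x \<ge> 0"
    and m_int: "integrable lborel m"
    and m_prob: "(\<integral>x. m x \<partial>lborel) = 1"
    and mu_moment: "integrable (density lborel (\<lambda>x. ennreal (m x))) (\<lambda>x. norm x)"
    and kappa_ge: "\<kappa> \<ge> 1"
  defines "Z \<equiv> (\<integral>x. exp (- V x) \<partial>lborel)"
  defines "\<mu> \<equiv> density lborel (\<lambda>x. ennreal (m x))"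
  defines "\<gamma> \<equiv> density lborel (\<lambda>x. ennreal (exp (- V x) / Z))"
  assumes m_lower: "\<And>x. norm x \<ge> \<rho>\<^sub>0 \<Longrightarrow> m x \<ge> exp (- V x) / (\<kappa> * Z)"
  defines "\<Lambda> \<equiv> lam / 2 + (SUP s \<in> sphere 0 1. \<bar>V (\<rho>\<^sub>0 *\<^sub>R s)\<bar>) / \<rho>\<^sub>0\<^sup>2
                + (SUP s \<in> sphere 0 1. norm (gradV (\<rho>\<^sub>0 *\<^sub>R s))) / \<rho>\<^sub>0"
  defines "d \<equiv> DIM('a)"
  defines "f_low \<equiv> (INF s \<in> sphere 0 1. f (\<rho>\<^sub>0 *\<^sub>R s))"
  defines "\<delta> \<equiv> (\<integral>x. f x \<partial>\<gamma>) + \<beta> * \<rho>\<^sub>0 - f_low"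
  defines "P \<equiv> (\<lambda>r. measure \<mu> {y \<in> space \<mu>. f y - (\<integral>x. f x \<partial>\<mu>) \<ge> r - (W1 \<mu> \<gamma> + \<delta>)})"
  shows "\<forall>r > 0.
     (even d \<longrightarrow>
        P r \<ge> (sphere_measure A * fact (d div 2 - 1) / 2)
               / (Z * \<Lambda> powr (real d / 2) * \<kappa>) * exp (- \<Lambda> * (max (r / \<beta>) \<rho>\<^sub>0)\<^sup>2)) \<and>
     (odd d \<longrightarrow> (\<forall>\<theta> > 1.
        P r \<ge> arccos (\<theta> powr (-1/2)) *
               (sphere_measure A * (\<Prod>j = 1..(d - 1) div 2. (real j - 1/2)) / sqrt pi)
               / (Z * \<Lambda> powr (real d / 2) * \<kappa>) * exp (- \<theta> * \<Lambda> * (max (r / \<beta>) \<rho>\<^sub>0)\<^sup>2)))"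
proof -
  have V_conv: "convex_on UNIV V"
    using hess_bounds by (intro convex_on_of_hessian_nonneg[OF V_grad V_hess]) blast
  have V_cont: "continuous_on UNIV V"
    using has_derivative_continuous[OF V_grad] by (simp add: continuous_on_eq_continuous_at)
  note \<gamma> = gibbs_measure[OF V_conv V_cont V_int, folded Z_def \<gamma>_def]
  have \<mu>: "prob_space \<mu>"
    unfolding \<mu>_def using m_int m_nonneg m_prob by (rule prob_space_density_of_integral_eq_1)
  have W1: "(\<integral>x. f x \<partial>\<mu>) - (\<integral>x. f x \<partial>\<gamma>) \<le> W1 \<mu> \<gamma>"
    using lipschitz_integral_diff_le_W1[OF \<mu> _ mu_moment[folded \<mu>_def] \<gamma>(2) _ \<gamma>(3) f_lip]
    by (simp add: \<mu>_def \<gamma>_def)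
  have \<Lambda>: "\<Lambda> > 0" "\<And>y. norm y \<ge> \<rho>\<^sub>0 \<Longrightarrow> V y \<le> \<Lambda> * (norm y)\<^sup>2"
    using potential_le_quadratic_outside_ball[OF V_grad V_hess _ _ rho0_pos, of lam] hess_bounds lambda_ge
    unfolding \<Lambda>_def by auto
  have m_ge: "exp (- \<Lambda> * (norm y)\<^sup>2) \<le> (\<kappa> * Z) * m y" if y: "norm y \<ge> \<rho>\<^sub>0" for y
  proof -
    have "exp (- \<Lambda> * (norm y)\<^sup>2) \<le> exp (- V y)" using \<Lambda>(2)[OF y] by simp
    also have "\<dots> \<le> (\<kappa> * Z) * m y"
      using m_lower[OF y] \<gamma>(1) kappa_ge by (simp add: pos_divide_le_eq mult.commute)
    finally show ?thesis .
  qed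
  have [measurable]: "f \<in> borel_measurable borel"
    using lipschitz_on_continuous_on[OF f_lip] by (rule borel_measurable_continuous_onI)
  have P: "K / (\<kappa> * Z) \<le> P r"
    if "ennreal K \<le> (\<integral>\<^sup>+y. indicator (radial_cone A - cball 0 (max (r / \<beta>) \<rho>\<^sub>0)) y
                            * ennreal (exp (- \<Lambda> * (norm y)\<^sup>2)) \<partial>lebesgue)" for r K
    unfolding P_def \<mu>_def
    using \<mu> m_meas f_G beta_pos f_nonneg W1 \<gamma>(1) kappa_ge m_ge that
    by (intro measure_event_ge_cone_integral[where f=f] bdd_belowI2[where m=0])
      (auto simp: \<mu>_def \<delta>_def f_low_def)
  have A: "A \<subseteq> sphere 0 1" "unit_cone A \<in> sets lebesgue" using f_G by (auto simp: G_cond_def)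
  have R: "max (r / \<beta>) \<rho>\<^sub>0 > 0" for r using rho0_pos by (simp add: less_max_iff_disj)
  have rearrange: "X / (Z * \<Lambda> powr (real d / 2) * \<kappa>) * e = (X / \<Lambda> powr (real d / 2) * e) / (\<kappa> * Z)"
    for X e :: real
    by (simp add: mult_ac)
  show ?thesis
    unfolding rearrange unfolding d_def
    using P nn_integral_radial_cone_gaussian_ge_even[OF A R \<Lambda>(1)]
      nn_integral_radial_cone_gaussian_ge_odd[OF A R \<Lambda>(1)] by blast
qed

end
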